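(* Let $\mathcal{A}>0$ be rational and let $t_1,t_2\in T_\mathcal{A}\cap(0,1)$. Define \[t_3=\left(\frac{\sqrt{t_2(1-t_1^2)}+\sqrt{t_1(1-t_2^2)}}{1+t_1t_2}\right)^2,\] with positive real square roots. Then $t_3$ is rational, $t_3\in T_\mathcal{A}$, and both $(1+t_1)(1+t_2)(1+t_3)$ and $(1-t_1)(1-t_2)(1-t_3)$ are squares of rational numbers.
   Context: $T_\mathcal{A}=\{t\in\mathbb Q:\ t(1-t^2)=\mathcal{A}r^2 \text{ for some } r\in\mathbb Q\}$. An element $t\in T_\mathcal{A}\cap(0,1)$ is the parameter of the rational right triangle with sides $(1-t^2,2t,1+t^2)$, whose area $t(1-t^2)$ equals $\mathcal{A}$ times a rational square. *)

theory Defs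
  imports Complex_Main
begin

definition T_set :: "rat \<Rightarrow> rat set" where
  "T_set A = {t. \<exists>r::rat. t * (1 - t^2) = A * r^2}"

end

theory Submission
  imports Defs
begin

text \<open>Write \<open>a = t\<^sub>2(1 - t\<^sub>1\<^sup>2)\<close>, \<open>b = t\<^sub>1(1 - t\<^sub>2\<^sup>2)\<close> and \<open>D = 1 + t\<^sub>1t\<^sub>2\<close>. Since \<open>ab\<close> is the product
  of the two areas \<open>A r\<^sub>1\<^sup>2\<close> and \<open>A r\<^sub>2\<^sup>2\<close>, its square root \<open>w = A r\<^sub>1 r\<^sub>2\<close> is rational, and so is
  \<open>t\<^sub>3 = (a + b + 2w)/D\<^sup>2\<close>. Direct computation factors \<open>(1 \<plusminus> t\<^sub>1)(1 \<plusminus> t\<^sub>2)(1 \<plusminus> t\<^sub>3)\<close> as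
  \<open>(((1 \<plusminus> t\<^sub>1)(1 \<plusminus> t\<^sub>2) \<plusminus> w)/D)\<^sup>2\<close>. Multiplying the two squares gives
  \<open>(1 - t\<^sub>1\<^sup>2)(1 - t\<^sub>2\<^sup>2)(1 - t\<^sub>3\<^sup>2)\<close> as a square, and \<open>t\<^sub>3 = A (t\<^sub>2r\<^sub>1 + t\<^sub>1r\<^sub>2)\<^sup>2/(t\<^sub>1t\<^sub>2D\<^sup>2)\<close>,
  so \<open>t\<^sub>3(1 - t\<^sub>3\<^sup>2)\<close> is \<open>A\<close> times a square.\<close>

definition param_sum :: "'a::field \<Rightarrow> 'a \<Rightarrow> 'a \<Rightarrow> 'a" where
  "param_sum t1 t2 w = (t2 * (1 - t1^2) + t1 * (1 - t2^2) + 2 * w) / (1 + t1 * t2)^2"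

lemma one_plus_param_sum:
  fixes t1 t2 w :: "'a::field"
  assumes w: "w^2 = t1 * (1 - t1^2) * (t2 * (1 - t2^2))" and D: "1 + t1 * t2 \<noteq> 0"
  shows "(1 + t1) * (1 + t2) * (1 + param_sum t1 t2 w) = (((1 + t1) * (1 + t2) + w) / (1 + t1 * t2))^2"
  using D w unfolding param_sum_def by (simp add: field_simps) algebra

lemma one_minus_param_sum:
  fixes t1 t2 w :: "'a::field"
  assumes w: "w^2 = t1 * (1 - t1^2) * (t2 * (1 - t2^2))" and D: "1 + t1 * t2 \<noteq> 0"
  shows "(1 - t1) * (1 - t2) * (1 - param_sum t1 t2 w) = (((1 - t1) * (1 - t2) - w) / (1 + t1 * t2))^2"
  using D w unfolding param_sum_def by (simp add: field_simps) algebra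

lemma param_sum_eq_scaled_square:
  fixes A t1 t2 r1 r2 :: "'a::field"
  assumes e1: "t1 * (1 - t1^2) = A * r1^2" and e2: "t2 * (1 - t2^2) = A * r2^2"
    and t: "t1 \<noteq> 0" "t2 \<noteq> 0"
  shows "param_sum t1 t2 (A * r1 * r2) = A * (t2 * r1 + t1 * r2)^2 / (t1 * t2 * (1 + t1 * t2)^2)"
proof -
  have "A * (t2 * r1 + t1 * r2)^2 = t2^2 * (A * r1^2) + t1^2 * (A * r2^2) + 2 * t1 * t2 * (A * r1 * r2)"
    by (simp add: algebra_simps power2_eq_square)
  also have "\<dots> = t1 * t2 * (t2 * (1 - t1^2) + t1 * (1 - t2^2) + 2 * (A * r1 * r2))"
    unfolding e1[symmetric] e2[symmetric] by (simp add: algebra_simps power2_eq_square)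
  finally show ?thesis
    using t unfolding param_sum_def by simp
qed

lemma param_sum_area_eq:
  fixes A t1 t2 r1 r2 :: "'a::field"
  assumes e1: "t1 * (1 - t1^2) = A * r1^2" and e2: "t2 * (1 - t2^2) = A * r2^2"
    and w: "A * r1 * r2 \<noteq> 0" and D: "1 + t1 * t2 \<noteq> 0"
  defines "t3 \<equiv> param_sum t1 t2 (A * r1 * r2)"
    and "u \<equiv> ((1 + t1) * (1 + t2) + A * r1 * r2) / (1 + t1 * t2)"
    and "v \<equiv> ((1 - t1) * (1 - t2) - A * r1 * r2) / (1 + t1 * t2)"
  shows "t3 * (1 - t3^2) = A * ((t2 * r1 + t1 * r2) * u * v / (A * r1 * r2 * (1 + t1 * t2)))^2"
proof -
  have areas: "(A * r1 * r2)^2 = t1 * (1 - t1^2) * (t2 * (1 - t2^2))"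
    unfolding e1 e2 by (simp add: algebra_simps power2_eq_square)
  with w have nz: "t1 \<noteq> 0" "t2 \<noteq> 0" "(1 - t1^2) * (1 - t2^2) \<noteq> 0"
    by auto
  have "(1 - t1^2) * (1 - t2^2) * (1 - t3^2)
      = ((1 + t1) * (1 + t2) * (1 + t3)) * ((1 - t1) * (1 - t2) * (1 - t3))"
    by (simp add: algebra_simps power2_eq_square)
  also have "\<dots> = u^2 * v^2"
    unfolding t3_def u_def v_def
    using one_plus_param_sum[OF areas D] one_minus_param_sum[OF areas D]
    by simp
  finally have one_minus_sq: "1 - t3^2 = u^2 * v^2 / ((1 - t1^2) * (1 - t2^2))"
    using nz(3) by (simp add: field_simps)
  have t3_eq: "t3 = A * (t2 * r1 + t1 * r2)^2 / (t1 * t2 * (1 + t1 * t2)^2)"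
    unfolding t3_def using param_sum_eq_scaled_square[OF e1 e2 nz(1,2)] .
  have "t3 * (1 - t3^2)
      = A * (t2 * r1 + t1 * r2)^2 / (t1 * t2 * (1 + t1 * t2)^2) * (u^2 * v^2 / ((1 - t1^2) * (1 - t2^2)))"
    unfolding one_minus_sq by (simp only: t3_eq)
  also have "\<dots> = A * ((t2 * r1 + t1 * r2) * u * v)^2
      / ((t1 * (1 - t1^2) * (t2 * (1 - t2^2))) * (1 + t1 * t2)^2)"
    by (simp add: power_mult_distrib ac_simps)
  also have "\<dots> = A * ((t2 * r1 + t1 * r2) * u * v / (A * r1 * r2 * (1 + t1 * t2)))^2"
    unfolding areas[symmetric] by (simp add: power_divide power_mult_distrib)
  finally show ?thesis .
qed

lemma sqrt_add_sqrt_squared: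
  fixes a b :: real
  assumes "a \<ge> 0" "b \<ge> 0"
  shows "(sqrt a + sqrt b)^2 = a + b + 2 * sqrt (a * b)"
  using assms by (simp add: power2_sum real_sqrt_mult)

lemma of_rat_param_sum:
  fixes t1 t2 w :: rat
  assumes t1: "0 < t1" "t1 < 1" and t2: "0 < t2" "t2 < 1"
    and w: "w \<ge> 0" "w^2 = t1 * (1 - t1^2) * (t2 * (1 - t2^2))"
  shows "of_rat (param_sum t1 t2 w)
    = ((sqrt (of_rat t2 * (1 - (of_rat t1)^2)) + sqrt (of_rat t1 * (1 - (of_rat t2)^2)))
       / (1 + of_rat t1 * of_rat t2))^2"
proof -
  have a: "0 \<le> t2 * (1 - t1^2)" and b: "0 \<le> t1 * (1 - t2^2)"
    using t1 t2 by (simp_all add: abs_square_less_1 less_imp_le)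
  have "sqrt (of_rat (t2 * (1 - t1^2)) * of_rat (t1 * (1 - t2^2))) = sqrt ((of_rat w)^2)"
    using w(2) by (simp add: of_rat_mult [symmetric] of_rat_power [symmetric] algebra_simps)
  also have "\<dots> = of_rat w"
    using w(1) by simp
  moreover have "(sqrt (of_rat (t2 * (1 - t1^2))) + sqrt (of_rat (t1 * (1 - t2^2))))^2
      = of_rat (t2 * (1 - t1^2)) + of_rat (t1 * (1 - t2^2))
        + 2 * sqrt (of_rat (t2 * (1 - t1^2)) * of_rat (t1 * (1 - t2^2)))"
    by (rule sqrt_add_sqrt_squared) (use a b in simp_all)
  ultimately have "(sqrt (of_rat (t2 * (1 - t1^2))) + sqrt (of_rat (t1 * (1 - t2^2))))^2
      = of_rat (t2 * (1 - t1^2) + t1 * (1 - t2^2) + 2 * w)"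
    by (simp only: of_rat_add of_rat_mult of_rat_numeral_eq)
  then show ?thesis
    unfolding param_sum_def
    by (simp add: power_divide of_rat_divide of_rat_add of_rat_mult of_rat_diff of_rat_power)
qed

lemma T_set_pos_witness:
  assumes "t \<in> T_set A" "0 < t" "t < 1"
  obtains r where "r > 0" "t * (1 - t^2) = A * r^2"
proof -
  obtain r where r: "t * (1 - t^2) = A * r^2"
    using assms(1) unfolding T_set_def by blast
  have "t * (1 - t^2) > 0"
    using assms(2,3) by (simp add: abs_square_less_1)
  with r have "\<bar>r\<bar> > 0"
    by auto
  with r show thesis
    by (intro that[of "\<bar>r\<bar>"]) simp_all
qed

theorem mainTheorem7:
  fixes A t1 t2 :: rat
  assumes hA: "A > 0"
    and h1: "t1 \<in> T_set A" and h1i: "0 < t1" "t1 < 1"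
    and h2: "t2 \<in> T_set A" and h2i: "0 < t2" "t2 < 1"
  defines "t3r \<equiv> ((sqrt (of_rat t2 * (1 - (of_rat t1)^2)) + sqrt (of_rat t1 * (1 - (of_rat t2)^2)))
                    / (1 + of_rat t1 * of_rat t2))^2"
  shows "\<exists>t3::rat. of_rat t3 = t3r \<and> t3 \<in> T_set A
           \<and> (\<exists>u::rat. (1 + t1) * (1 + t2) * (1 + t3) = u^2)
           \<and> (\<exists>v::rat. (1 - t1) * (1 - t2) * (1 - t3) = v^2)"
proof -
  obtain r1 where r1: "r1 > 0" and e1: "t1 * (1 - t1^2) = A * r1^2"
    using T_set_pos_witness[OF h1 h1i] .
  obtain r2 where r2: "r2 > 0" and e2: "t2 * (1 - t2^2) = A * r2^2"
    using T_set_pos_witness[OF h2 h2i] .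
  define w where "w = A * r1 * r2"
  have w_pos: "w > 0"
    unfolding w_def using hA r1 r2 by simp
  have areas: "w^2 = t1 * (1 - t1^2) * (t2 * (1 - t2^2))"
    unfolding w_def e1 e2 by (simp add: algebra_simps power2_eq_square)
  have D: "1 + t1 * t2 \<noteq> 0"
    using mult_pos_pos[OF h1i(1) h2i(1)] by linarith
  show ?thesis
  proof (intro exI conjI)
    show "of_rat (param_sum t1 t2 w) = t3r"
      unfolding t3r_def using of_rat_param_sum[OF h1i h2i less_imp_le[OF w_pos] areas] .
    have "A * r1 * r2 \<noteq> 0"
      using w_pos unfolding w_def by (metis less_irrefl)
    then show "param_sum t1 t2 w \<in> T_set A"
      using param_sum_area_eq[OF e1 e2 _ D] unfolding T_set_def w_def by blast
    show "(1 + t1) * (1 + t2) * (1 + param_sum t1 t2 w) = (((1 + t1) * (1 + t2) + w) / (1 + t1 * t2))^2"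
      using one_plus_param_sum[OF areas D] .
    show "(1 - t1) * (1 - t2) * (1 - param_sum t1 t2 w) = (((1 - t1) * (1 - t2) - w) / (1 + t1 * t2))^2"
      using one_minus_param_sum[OF areas D] .
  qed
qed

end
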